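(* Let $P,Q\in C^{\infty}(\mathbb{R}^{2})$ be real-valued, and consider the planar vector field $x'=P(x,y),\ y'=Q(x,y)$ together with the first-order differential operator $D$ on $C^{\infty}(\mathbb{R}^{2})$ (complex-valued smooth functions) given by $D(U)=PU_{x}+QU_{y}$. Let $A$ be a self-adjoint subalgebra of $C^{\infty}(\mathbb{R}^{2})$ which separates compact submanifolds of $\mathbb{R}^{2}$, and assume $D(A)\subseteq A$. Then the number of closed orbits (periodic solutions) of the vector field is less than or equal to the codimension of the range $D(A)$ in $A$, i.e. $\dim_{\mathbb{C}} A/D(A)$.
   Context: A subalgebra $A\subseteq C^{\infty}(\mathbb{R}^{2})$ is self-adjoint if it is closed under complex conjugation. $A$ separates compact submanifolds of $\mathbb{R}^{2}$ if for every finite collection of pairwise disjoint smooth closed curves $\gamma_{1},\ldots,\gamma_{n}$ in $\mathbb{R}^{2}$ there exists a real-valued $f\in A$ such that $f(x_{i})\neq f(x_{j})$ for all $x_{i}\in\gamma_{i}$, $x_{j}\in\gamma_{j}$ with $i\neq j$. *)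

theory Defs
  imports "HOL-Analysis.Analysis"
begin

coinductive Cinf :: "('a::euclidean_space \<Rightarrow> 'b::real_normed_vector) \<Rightarrow> bool" where
  "(\<And>x. f differentiable (at x)) \<Longrightarrow> (\<And>v. Cinf (\<lambda>x. frechet_derivative f (at x) v))
     \<Longrightarrow> Cinf f"

definition partial_x :: "(real \<times> real \<Rightarrow> 'b::real_normed_vector) \<Rightarrow> real \<times> real \<Rightarrow> 'b" where
  "partial_x U z = frechet_derivative U (at z) (1, 0)"

definition partial_y :: "(real \<times> real \<Rightarrow> 'b::real_normed_vector) \<Rightarrow> real \<times> real \<Rightarrow> 'b" where
  "partial_y U z = frechet_derivative U (at z) (0, 1)"

definition Dop :: "(real \<times> real \<Rightarrow> real) \<Rightarrow> (real \<times> real \<Rightarrow> real)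
                    \<Rightarrow> (real \<times> real \<Rightarrow> complex) \<Rightarrow> real \<times> real \<Rightarrow> complex" where
  "Dop P Q U = (\<lambda>z. complex_of_real (P z) * partial_x U z + complex_of_real (Q z) * partial_y U z)"

definition subalgebra :: "(real \<times> real \<Rightarrow> complex) set \<Rightarrow> bool" where
  "subalgebra A \<longleftrightarrow> A \<subseteq> {U. Cinf U} \<and> (\<lambda>_. 0) \<in> A \<and>
     (\<forall>U\<in>A. \<forall>V\<in>A. (\<lambda>z. U z + V z) \<in> A) \<and>
     (\<forall>c. \<forall>U\<in>A. (\<lambda>z. c * U z) \<in> A) \<and>
     (\<forall>U\<in>A. \<forall>V\<in>A. (\<lambda>z. U z * V z) \<in> A)"

definition self_adjoint :: "(real \<times> real \<Rightarrow> complex) set \<Rightarrow> bool" where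
  "self_adjoint A \<longleftrightarrow> (\<forall>U\<in>A. (\<lambda>z. cnj (U z)) \<in> A)"

text \<open>A smooth closed curve: the image of a smooth T-periodic immersion of R into R^2
  that is injective on one period (i.e. a smooth embedded circle).\<close>
definition smooth_closed_curve :: "(real \<times> real) set \<Rightarrow> bool" where
  "smooth_closed_curve C \<longleftrightarrow> (\<exists>c :: real \<Rightarrow> real \<times> real. \<exists>T>0.
     Cinf c \<and> (\<forall>t. c (t + T) = c t) \<and> inj_on c {0..<T} \<and>
     (\<forall>t. vector_derivative c (at t) \<noteq> 0) \<and> C = c ` {0..T})"

definition separates_compact_submanifolds :: "(real \<times> real \<Rightarrow> complex) set \<Rightarrow> bool" where
  "separates_compact_submanifolds A \<longleftrightarrow>
     (\<forall>\<C>. finite \<C> \<and> (\<forall>C\<in>\<C>. smooth_closed_curve C) \<and>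
          (\<forall>C1\<in>\<C>. \<forall>C2\<in>\<C>. C1 \<noteq> C2 \<longrightarrow> C1 \<inter> C2 = {})
       \<longrightarrow> (\<exists>f\<in>A. (\<forall>z. f z \<in> \<real>) \<and>
              (\<forall>C1\<in>\<C>. \<forall>C2\<in>\<C>. C1 \<noteq> C2 \<longrightarrow> (\<forall>x\<in>C1. \<forall>y\<in>C2. f x \<noteq> f y))))"

text \<open>Dimension over C of the quotient V/W (V, W sets of functions, W a subspace of V):
  the supremum of the sizes of finite subsets of V that are linearly independent modulo W.\<close>
definition indep_mod :: "(real \<times> real \<Rightarrow> complex) set \<Rightarrow> (real \<times> real \<Rightarrow> complex) set \<Rightarrow> bool" where
  "indep_mod W S \<longleftrightarrow> (\<forall>c :: (real \<times> real \<Rightarrow> complex) \<Rightarrow> complex.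
      (\<lambda>z. \<Sum>u\<in>S. c u * u z) \<in> W \<longrightarrow> (\<forall>u\<in>S. c u = 0))"

definition quotient_dim :: "(real \<times> real \<Rightarrow> complex) set \<Rightarrow> (real \<times> real \<Rightarrow> complex) set \<Rightarrow> enat" where
  "quotient_dim V W = (SUP S \<in> {S. finite S \<and> S \<subseteq> V \<and> indep_mod W S}. enat (card S))"

definition is_solution :: "(real \<times> real \<Rightarrow> real) \<Rightarrow> (real \<times> real \<Rightarrow> real) \<Rightarrow> (real \<Rightarrow> real \<times> real) \<Rightarrow> bool" where
  "is_solution P Q \<gamma> \<longleftrightarrow> (\<forall>t. (\<gamma> has_vector_derivative (P (\<gamma> t), Q (\<gamma> t))) (at t))"

definition closed_orbits :: "(real \<times> real \<Rightarrow> real) \<Rightarrow> (real \<times> real \<Rightarrow> real) \<Rightarrow> (real \<times> real) set set" where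
  "closed_orbits P Q = {range \<gamma> | \<gamma>. is_solution P Q \<gamma> \<and>
      (\<exists>T>0. \<forall>t. \<gamma> (t + T) = \<gamma> t) \<and> (\<exists>s t. \<gamma> s \<noteq> \<gamma> t)}"

definition ecard :: "'a set \<Rightarrow> enat" where
  "ecard S = (if finite S then enat (card S) else \<infinity>)"

end

theory Submission
  imports Defs
begin


text \<open>Integration along a closed orbit \<open>\<gamma>\<close> of period \<open>T\<close>, \<open>U \<mapsto> \<integral>\<^sub>0\<^sup>T U(\<gamma>(t)) dt\<close>, is a
  linear functional on \<open>A\<close> that kills \<open>D(A)\<close>, because \<open>(D U)(\<gamma>(t))\<close> is the derivative of
  \<open>U(\<gamma>(t))\<close>. It therefore suffices to find, for finitely many distinct closed orbits
  \<open>C\<^sub>1, \<dots>, C\<^sub>k\<close>, functions \<open>U\<^sub>1, \<dots>, U\<^sub>k \<in> A\<close> whose matrix of orbit integrals is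
  nonsingular. Distinct orbits are disjoint embedded circles, so the separation hypothesis gives
  a real \<open>f \<in> A\<close> mapping them to disjoint compact sets \<open>f(C\<^sub>i)\<close>, and a weight
  \<open>\<phi> = \<Sum> w\<^sub>i\<^sup>2 \<in> A\<close> that is non-negative and positive somewhere on every orbit. With \<open>p\<^sub>i\<close> a
  polynomial approximating the indicator function of \<open>f(C\<^sub>i)\<close> (Weierstrass), the functions
  \<open>U\<^sub>i = \<phi> \<cdot> p\<^sub>i(f)\<close> have a strictly diagonally dominant matrix of orbit integrals.\<close>

section \<open>Smooth functions\<close>

lemma Cinf_differentiable: "Cinf f \<Longrightarrow> f differentiable (at x)"
  by (erule Cinf.cases) auto

lemma Cinf_frechet_derivative: "Cinf f \<Longrightarrow> Cinf (\<lambda>x. frechet_derivative f (at x) v)"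
  by (erule Cinf.cases) auto

lemma Cinf_has_derivative: "Cinf f \<Longrightarrow> (f has_derivative frechet_derivative f (at x)) (at x)"
  using Cinf_differentiable frechet_derivative_works by blast

lemma Cinf_continuous_on: "Cinf f \<Longrightarrow> continuous_on S f"
  by (meson Cinf_differentiable continuous_at_imp_continuous_on differentiable_imp_continuous_within)

lemma Cinf_affine:
  assumes "bounded_linear L"
  shows "Cinf (\<lambda>x. L x + c)"
proof -
  have "Cinf g" if "\<exists>L c. bounded_linear L \<and> g = (\<lambda>x. L x + c)" for g :: "'a \<Rightarrow> 'b"
    using that
  proof (coinduction arbitrary: g)
    case Cinf
    then obtain L c where L: "bounded_linear L" and g: "g = (\<lambda>x. L x + c)" by blast
    have d: "(g has_derivative L) (at x)" for x
      unfolding g using L by (auto intro!: derivative_eq_intros bounded_linear_imp_has_derivative)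
    have "(\<lambda>x. frechet_derivative g (at x) v) = (\<lambda>x. (\<lambda>_. 0) x + L v)" for v
      by (simp add: frechet_derivative_at[OF d, symmetric])
    then have "\<exists>L' c'. bounded_linear L' \<and> (\<lambda>x. frechet_derivative g (at x) v) = (\<lambda>x. L' x + c')"
      for v using bounded_linear_zero by blast
    then show ?case using d by (auto simp: differentiable_def)
  qed
  then show ?thesis using assms by blast
qed

lemma Cinf_const: "Cinf (\<lambda>x. c)"
  using Cinf_affine[OF bounded_linear_zero, of c] by simp

lemma Cinf_id: "Cinf (\<lambda>x. x)"
  using Cinf_affine[OF bounded_linear_ident, of 0] by simp

inductive_set sums_of_scaled :: "('a::euclidean_space \<Rightarrow> 'b::real_normed_vector) set" where
  scaled: "Cinf p \<Longrightarrow> Cinf H \<Longrightarrow> (\<lambda>z. p z *\<^sub>R H z) \<in> sums_of_scaled"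
| add: "f \<in> sums_of_scaled \<Longrightarrow> g \<in> sums_of_scaled \<Longrightarrow> (\<lambda>z. f z + g z) \<in> sums_of_scaled"

lemma sums_of_scaled_derivative:
  assumes "f \<in> sums_of_scaled"
  shows "f differentiable (at x) \<and> (\<lambda>x. frechet_derivative f (at x) v) \<in> sums_of_scaled"
  using assms
proof (induction arbitrary: x v)
  case (scaled p H)
  have d: "((\<lambda>z. p z *\<^sub>R H z) has_derivative
      (\<lambda>h. p x *\<^sub>R frechet_derivative H (at x) h + frechet_derivative p (at x) h *\<^sub>R H x)) (at x)"
    for x
    using Cinf_has_derivative[OF scaled(1)] Cinf_has_derivative[OF scaled(2)]
    by (rule has_derivative_scaleR)
  have "(\<lambda>x. p x *\<^sub>R frechet_derivative H (at x) v + frechet_derivative p (at x) v *\<^sub>R H x)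
      \<in> sums_of_scaled"
    using scaled by (intro sums_of_scaled.intros Cinf_frechet_derivative)
  then show ?case
    using d[of x] by (auto simp: differentiable_def frechet_derivative_at[OF d, symmetric])
next
  case (add f g)
  have d: "((\<lambda>z. f z + g z) has_derivative
      (\<lambda>h. frechet_derivative f (at x) h + frechet_derivative g (at x) h)) (at x)" for x
    using add.IH by (intro has_derivative_add) (auto simp: frechet_derivative_works[symmetric])
  show ?case
    using d[of x] add.IH
    by (auto simp: differentiable_def frechet_derivative_at[OF d, symmetric] intro: sums_of_scaled.add)
qed

lemma sums_of_scaled_Cinf: "f \<in> sums_of_scaled \<Longrightarrow> Cinf f"
  by (coinduction arbitrary: f) (use sums_of_scaled_derivative in blast)

lemma Cinf_scaleR: "Cinf p \<Longrightarrow> Cinf H \<Longrightarrow> Cinf (\<lambda>z. p z *\<^sub>R H z)"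
  by (rule sums_of_scaled_Cinf[OF sums_of_scaled.scaled])

lemma Cinf_add:
  assumes "Cinf f" "Cinf g"
  shows "Cinf (\<lambda>z. f z + g z)"
proof -
  have "(\<lambda>z. (\<lambda>_. 1::real) z *\<^sub>R f z + (\<lambda>_. 1::real) z *\<^sub>R g z) \<in> sums_of_scaled"
    using assms by (intro sums_of_scaled.intros Cinf_const)
  then show ?thesis by (simp add: sums_of_scaled_Cinf)
qed

lemma linear_apply_Pair:
  assumes "linear L"
  shows "L (a, b) = a *\<^sub>R L (1, 0) + b *\<^sub>R L (0, 1)"
proof -
  have "L (a, b) = L (a *\<^sub>R (1, 0) + b *\<^sub>R (0, 1))" by simp
  then show ?thesis by (simp only: linear_add[OF assms] linear_scale[OF assms])
qed

lemma frechet_derivative_Pair: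
  assumes "H differentiable (at z)"
  shows "frechet_derivative H (at z) (a, b)
    = a *\<^sub>R frechet_derivative H (at z) (1, 0) + b *\<^sub>R frechet_derivative H (at z) (0, 1)"
  using assms frechet_derivative_works has_derivative_linear linear_apply_Pair by blast

lemma Cinf_derivative_along:
  fixes P Q :: "real \<times> real \<Rightarrow> real"
  assumes "Cinf P" "Cinf Q" "Cinf H"
  shows "Cinf (\<lambda>z. frechet_derivative H (at z) (P z, Q z))"
proof -
  have "frechet_derivative H (at z) (P z, Q z)
      = P z *\<^sub>R frechet_derivative H (at z) (1, 0) + Q z *\<^sub>R frechet_derivative H (at z) (0, 1)" for z
    by (rule frechet_derivative_Pair[OF Cinf_differentiable[OF \<open>Cinf H\<close>]])
  then show ?thesis
    using assms by (simp only:) (intro Cinf_add Cinf_scaleR Cinf_frechet_derivative)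
qed

lemma Cinf_Pair:
  fixes P Q :: "real \<times> real \<Rightarrow> real"
  assumes "Cinf P" "Cinf Q"
  shows "Cinf (\<lambda>z. (P z, Q z))"
proof -
  have "Cinf (\<lambda>z. P z *\<^sub>R (1::real, 0::real) + Q z *\<^sub>R (0, 1))"
    using assms by (intro Cinf_add Cinf_scaleR Cinf_const)
  then show ?thesis by simp
qed

lemma onorm_le_sum_Basis:
  fixes f :: "'a::euclidean_space \<Rightarrow> 'b::real_normed_vector"
  assumes "linear f"
  shows "onorm f \<le> (\<Sum>b\<in>Basis. norm (f b))"
proof (rule onorm_le)
  fix x :: 'a
  have "f x = f (\<Sum>b\<in>Basis. (x \<bullet> b) *\<^sub>R b)"
    by (simp add: euclidean_representation)
  also have "\<dots> = (\<Sum>b\<in>Basis. (x \<bullet> b) *\<^sub>R f b)"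
    by (simp add: linear_sum[OF assms] linear_scale[OF assms] o_def)
  finally have "norm (f x) = norm (\<Sum>b\<in>Basis. (x \<bullet> b) *\<^sub>R f b)"
    by simp
  also have "\<dots> \<le> (\<Sum>b\<in>Basis. norm x * norm (f b))"
    by (rule sum_norm_le) (simp add: Basis_le_norm mult_right_mono)
  also have "\<dots> = (\<Sum>b\<in>Basis. norm (f b)) * norm x"
    by (simp add: sum_distrib_left mult.commute)
  finally show "norm (f x) \<le> (\<Sum>b\<in>Basis. norm (f b)) * norm x" .
qed

lemma Cinf_lipschitz_on_cball:
  fixes F :: "'a::euclidean_space \<Rightarrow> 'b::real_normed_vector"
  assumes "Cinf F"
  shows "\<exists>L. L-lipschitz_on (cball x r) F"
proof -
  let ?B = "\<lambda>z. \<Sum>b\<in>Basis. norm (frechet_derivative F (at z) b)"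
  have "continuous_on (cball x r) ?B"
    using assms by (intro continuous_on_sum continuous_on_norm Cinf_continuous_on Cinf_frechet_derivative)
  then have "bounded (?B ` cball x r)"
    by (intro compact_imp_bounded compact_continuous_image compact_cball)
  then obtain L where "L > 0" and "\<forall>y\<in>?B ` cball x r. norm y \<le> L"
    unfolding bounded_pos by blast
  then have L: "?B z \<le> L" if "z \<in> cball x r" for z
    using that by (metis (no_types, lifting) image_eqI real_norm_def abs_le_D1)
  have "L-lipschitz_on (cball x r) F"
  proof (rule bounded_derivative_imp_lipschitz)
    show "(F has_derivative frechet_derivative F (at z)) (at z within cball x r)" for z
      using Cinf_has_derivative[OF assms] by (rule has_derivative_at_withinI)
    show "onorm (frechet_derivative F (at z)) \<le> L" if "z \<in> cball x r" for z
      using onorm_le_sum_Basis[OF has_derivative_linear[OF Cinf_has_derivative[OF assms]]] L[OF that]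
      by (rule order_trans)
  qed (use \<open>L > 0\<close> in auto)
  then show ?thesis ..
qed

section \<open>Uniqueness for autonomous equations\<close>

lemma zero_if_deriv_le_self:
  fixes d d' :: "real \<Rightarrow> real"
  assumes "a \<le> b" and "d a = 0"
    and deriv: "\<And>s. s \<in> {a..b} \<Longrightarrow> (d has_real_derivative d' s) (at s)"
    and bound: "\<And>s. s \<in> {a..b} \<Longrightarrow> d' s \<le> C * d s \<and> 0 \<le> d s"
  shows "d b = 0"
proof -
  define e where "e s = exp (- C * s) * d s" for s
  have "e b \<le> e a"
  proof (rule DERIV_nonpos_imp_nonincreasing[OF \<open>a \<le> b\<close>])
    fix s assume s: "a \<le> s" "s \<le> b"
    have "(e has_real_derivative exp (- C * s) * (d' s - C * d s)) (at s)"
      unfolding e_def using deriv[of s] s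
      by (auto intro!: derivative_eq_intros simp: algebra_simps)
    moreover have "exp (- C * s) * (d' s - C * d s) \<le> 0"
      using bound[of s] s by (simp add: mult_nonneg_nonpos)
    ultimately show "\<exists>y. (e has_real_derivative y) (at s) \<and> y \<le> 0" by blast
  qed
  then have "d b \<le> 0" using \<open>d a = 0\<close> by (simp add: e_def mult_le_0_iff)
  then show ?thesis using bound[of b] \<open>a \<le> b\<close> by simp
qed

lemma zero_if_abs_deriv_le_self:
  fixes d d' :: "real \<Rightarrow> real"
  assumes "d a = 0"
    and deriv: "\<And>s. s \<in> closed_segment a b \<Longrightarrow> (d has_real_derivative d' s) (at s)"
    and bound: "\<And>s. s \<in> closed_segment a b \<Longrightarrow> \<bar>d' s\<bar> \<le> C * d s \<and> 0 \<le> d s"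
  shows "d b = 0"
proof (cases "a \<le> b")
  case True
  then show ?thesis
    using zero_if_deriv_le_self[of a b d d' C] \<open>d a = 0\<close> deriv bound
    by (auto simp: closed_segment_eq_real_ivl abs_le_iff)
next
  case False
  have "(\<lambda>s. d (- s)) (- b) = 0"
  proof (rule zero_if_deriv_le_self[of "- a" "- b" _ "\<lambda>s. - d' (- s)" C])
    fix s assume "s \<in> {- a..- b}"
    then have s: "- s \<in> closed_segment a b"
      using False by (auto simp: closed_segment_eq_real_ivl)
    have "(uminus has_real_derivative - 1) (at s)"
      by (auto intro!: derivative_eq_intros)
    from DERIV_chain2[where g = uminus and x = s, OF deriv[OF s] this]
    show "((\<lambda>s. d (- s)) has_real_derivative - d' (- s)) (at s)" by simp
    show "- d' (- s) \<le> C * d (- s) \<and> 0 \<le> d (- s)"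
      using bound[OF s] by (simp add: abs_le_iff)
  qed (use False \<open>d a = 0\<close> in auto)
  then show ?thesis by simp
qed

lemma autonomous_ode_solutions_agree_near:
  fixes F :: "'a::real_inner \<Rightarrow> 'a"
  assumes lip: "\<And>x. \<exists>L. L-lipschitz_on (cball x 1) F"
    and g1: "\<And>t. (g1 has_vector_derivative F (g1 t)) (at t)"
    and g2: "\<And>t. (g2 has_vector_derivative F (g2 t)) (at t)"
    and "g1 t1 = g2 t1"
  shows "\<exists>\<delta>>0. \<forall>t\<in>ball t1 \<delta>. g1 t = g2 t"
proof -
  obtain L where L: "L-lipschitz_on (cball (g1 t1) 1) F" using lip by blast
  have "continuous_on UNIV g1" "continuous_on UNIV g2"
    using g1 g2 by (meson continuous_at_imp_continuous_on has_vector_derivative_continuous)+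
  then have "open (g1 -` ball (g1 t1) 1 \<inter> g2 -` ball (g1 t1) 1)"
    by (intro open_Int open_vimage open_ball)
  moreover have "t1 \<in> g1 -` ball (g1 t1) 1 \<inter> g2 -` ball (g1 t1) 1"
    using \<open>g1 t1 = g2 t1\<close> by simp
  ultimately obtain \<delta> where "\<delta> > 0" and \<delta>: "ball t1 \<delta> \<subseteq> g1 -` ball (g1 t1) 1 \<inter> g2 -` ball (g1 t1) 1"
    by (meson open_contains_ball)
  define d where "d t = (g1 t - g2 t) \<bullet> (g1 t - g2 t)" for t
  define d' where "d' t = 2 * ((g1 t - g2 t) \<bullet> (F (g1 t) - F (g2 t)))" for t
  have deriv: "(d has_real_derivative d' t) (at t)" for t
  proof -
    have "((\<lambda>t. g1 t - g2 t) has_derivative (\<lambda>h. h *\<^sub>R (F (g1 t) - F (g2 t)))) (at t)"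
      using has_vector_derivative_diff[OF g1 g2] unfolding has_vector_derivative_def .
    from has_derivative_inner[OF this this] show ?thesis
      unfolding has_field_derivative_def d_def d'_def
      by (rule has_derivative_eq_rhs) (auto simp: inner_commute algebra_simps)
  qed
  have bound: "\<bar>d' t\<bar> \<le> 2 * L * d t \<and> 0 \<le> d t" if "t \<in> ball t1 \<delta>" for t
  proof -
    have "\<bar>d' t\<bar> \<le> 2 * (norm (g1 t - g2 t) * norm (F (g1 t) - F (g2 t)))"
      unfolding d'_def using Cauchy_Schwarz_ineq2 by (simp add: abs_mult)
    also have "\<dots> \<le> 2 * (norm (g1 t - g2 t) * (L * norm (g1 t - g2 t)))"
    proof -
      have "g1 t \<in> cball (g1 t1) 1" "g2 t \<in> cball (g1 t1) 1"
        using \<delta> that by auto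
      then show ?thesis
        using lipschitz_onD[OF L, of "g1 t" "g2 t"] by (intro mult_left_mono) (auto simp: dist_norm)
    qed
    finally show ?thesis
      by (simp add: d_def power2_norm_eq_inner[symmetric] power2_eq_square mult_ac)
  qed
  have "d t = 0" if "t \<in> ball t1 \<delta>" for t
  proof (rule zero_if_abs_deriv_le_self[where d = d and d' = d' and a = t1 and b = t and C = "2 * L"])
    show "d t1 = 0" using \<open>g1 t1 = g2 t1\<close> by (simp add: d_def)
    have "closed_segment t1 t \<subseteq> ball t1 \<delta>"
      using that \<open>\<delta> > 0\<close> by (intro closed_segment_subset) auto
    then show "\<And>s. s \<in> closed_segment t1 t \<Longrightarrow> \<bar>d' s\<bar> \<le> 2 * L * d s \<and> 0 \<le> d s"
      using bound by blast
  qed (rule deriv)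
  then have "g1 t = g2 t" if "t \<in> ball t1 \<delta>" for t
    using that by (simp add: d_def)
  then show ?thesis using \<open>\<delta> > 0\<close> by blast
qed

lemma autonomous_ode_unique:
  fixes F :: "'a::real_inner \<Rightarrow> 'a"
  assumes lip: "\<And>x. \<exists>L. L-lipschitz_on (cball x 1) F"
    and g1: "\<And>t. (g1 has_vector_derivative F (g1 t)) (at t)"
    and g2: "\<And>t. (g2 has_vector_derivative F (g2 t)) (at t)"
    and "g1 a = g2 a"
  shows "g1 t = g2 t"
proof -
  let ?S = "{t. g1 t = g2 t}"
  have "continuous_on UNIV g1" "continuous_on UNIV g2"
    using g1 g2 by (meson continuous_at_imp_continuous_on has_vector_derivative_continuous)+
  then have "closed ?S" by (rule closed_Collect_eq)
  moreover have "open ?S"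
    unfolding open_contains_ball
  proof
    fix t1 assume "t1 \<in> ?S"
    then obtain \<delta> where "\<delta> > 0" "\<forall>t\<in>ball t1 \<delta>. g1 t = g2 t"
      using autonomous_ode_solutions_agree_near[OF lip g1 g2] by blast
    then show "\<exists>\<delta>>0. ball t1 \<delta> \<subseteq> ?S" by auto
  qed
  moreover have "a \<in> ?S" using \<open>g1 a = g2 a\<close> by simp
  ultimately have "?S = UNIV"
    using clopen[of ?S] by auto
  then show ?thesis by blast
qed

section \<open>Solutions of the planar system\<close>

lemma is_solution_iff:
  "is_solution P Q g \<longleftrightarrow> (\<forall>t. (g has_vector_derivative (\<lambda>z. (P z, Q z)) (g t)) (at t))"
  by (simp add: is_solution_def)

lemma is_solution_continuous_on: "is_solution P Q g \<Longrightarrow> continuous_on S g"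
  unfolding is_solution_def
  by (meson continuous_at_imp_continuous_on has_vector_derivative_continuous)

lemma is_solution_unique:
  assumes "Cinf P" "Cinf Q" "is_solution P Q g1" "is_solution P Q g2" "g1 a = g2 a"
  shows "g1 t = g2 t"
  using autonomous_ode_unique[of "\<lambda>z. (P z, Q z)" g1 g2 a t] assms
    Cinf_lipschitz_on_cball[OF Cinf_Pair[OF \<open>Cinf P\<close> \<open>Cinf Q\<close>]]
  by (simp add: is_solution_iff)

lemma is_solution_shift:
  assumes "is_solution P Q g"
  shows "is_solution P Q (\<lambda>t. g (t + c))"
  unfolding is_solution_def
proof
  fix t
  have "((\<lambda>t. t + c) has_vector_derivative 1) (at t)"
    by (auto intro!: derivative_eq_intros simp: has_real_derivative_iff_has_vector_derivative[symmetric])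
  from vector_diff_chain_at[OF this] assms
  have "(g \<circ> (\<lambda>t. t + c) has_vector_derivative 1 *\<^sub>R (P (g (t + c)), Q (g (t + c)))) (at t)"
    unfolding is_solution_def by blast
  then show "((\<lambda>t. g (t + c)) has_vector_derivative (P (g (t + c)), Q (g (t + c)))) (at t)"
    by (simp add: o_def)
qed

lemma is_solution_shift_eq:
  assumes "Cinf P" "Cinf Q" "is_solution P Q g1" "is_solution P Q g2" "g1 a = g2 b"
  shows "g1 (t + a) = g2 (t + b)"
proof -
  have "is_solution P Q (\<lambda>t. g1 (t + a))" "is_solution P Q (\<lambda>t. g2 (t + b))"
    using assms(3,4) by (auto intro: is_solution_shift)
  from is_solution_unique[OF assms(1,2) this, of 0 t] show ?thesis
    using assms(5) by simp
qed

lemma is_solution_return_imp_periodic: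
  assumes "Cinf P" "Cinf Q" "is_solution P Q g" "g a = g b"
  shows "g (t + (b - a)) = g t"
  using is_solution_shift_eq[OF assms(1,2,3,3) assms(4)[symmetric], of "t - a"]
  by (simp add: algebra_simps)

lemma is_solution_range_eq:
  assumes "Cinf P" "Cinf Q" "is_solution P Q g1" "is_solution P Q g2"
    and "x \<in> range g1" "x \<in> range g2"
  shows "range g1 = range g2"
proof -
  obtain a b where "g1 a = x" "g2 b = x" using assms(5,6) by auto
  then have "g1 (t + a) = g2 (t + b)" for t
    using is_solution_shift_eq[OF assms(1-4)] by simp
  then have "g1 s \<in> range g2" "g2 s \<in> range g1" for s
    by (metis diff_add_cancel rangeI)+
  then show ?thesis by blast
qed

lemma is_solution_constant_if_stationary:
  assumes "Cinf P" "Cinf Q" "is_solution P Q g" "P (g t) = 0" "Q (g t) = 0"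
  shows "g s = g t"
proof (rule is_solution_unique[OF assms(1-3), of _ t])
  show "is_solution P Q (\<lambda>_. g t)"
    using assms(4,5) by (simp add: is_solution_def zero_prod_def[symmetric])
qed simp

lemma is_solution_locally_injective:
  assumes "Cinf P" "Cinf Q" and sol: "is_solution P Q g" and nz: "(P (g t0), Q (g t0)) \<noteq> 0"
  shows "\<exists>\<delta>>0. \<forall>r. 0 < \<bar>r\<bar> \<and> \<bar>r\<bar> < \<delta> \<longrightarrow> g (t0 + r) \<noteq> g t0"
proof -
  define F where "F z = (P z, Q z)" for z
  define v where "v = F (g t0)"
  have "norm v > 0" using nz by (simp add: v_def F_def)
  have "continuous_on UNIV (F \<circ> g)"
    using sol Cinf_continuous_on[OF Cinf_Pair[OF assms(1,2)]] unfolding is_solution_def F_def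
    by (meson continuous_at_imp_continuous_on continuous_on_compose has_vector_derivative_continuous)
  then obtain \<delta> where "\<delta> > 0" and \<delta>: "\<And>t. dist t t0 < \<delta> \<Longrightarrow> dist (F (g t)) v < norm v / 2"
    using \<open>norm v > 0\<close> unfolding v_def
    by (metis continuous_on_eq_continuous_at continuous_at_eps_delta open_UNIV UNIV_I
        half_gt_zero o_apply)
  have "g (t0 + r) \<noteq> g t0" if r: "0 < \<bar>r\<bar>" "\<bar>r\<bar> < \<delta>" for r
  proof -
    have "norm (g (t0 + r) - g t0 - ((t0 + r) - t0) *\<^sub>R F (g t0)) \<le> norm ((t0 + r) - t0) * (norm v / 2)"
    proof (rule vector_differentiable_bound_linearization[where S = "ball t0 \<delta>" and f' = "\<lambda>t. F (g t)"])
      show "(g has_vector_derivative F (g t)) (at t within ball t0 \<delta>)" for t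
        using sol unfolding is_solution_def F_def by (blast intro: has_vector_derivative_at_within)
      show "closed_segment t0 (t0 + r) \<subseteq> ball t0 \<delta>"
        using r \<open>\<delta> > 0\<close> by (intro closed_segment_subset) (auto simp: dist_real_def)
      show "norm (F (g t) - F (g t0)) \<le> norm v / 2" if "t \<in> ball t0 \<delta>" for t
        using \<delta>[of t] that by (simp add: v_def dist_norm dist_commute abs_minus_commute)
    qed (use \<open>\<delta> > 0\<close> in simp)
    then have "norm (g (t0 + r) - g t0 - r *\<^sub>R v) \<le> \<bar>r\<bar> * norm v / 2" by (simp add: v_def)
    then have "\<bar>r\<bar> * norm v / 2 \<le> norm (g (t0 + r) - g t0)"
      using norm_triangle_ineq2[of "r *\<^sub>R v" "g (t0 + r) - g t0"]
      by (simp add: norm_minus_commute algebra_simps)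
    moreover have "0 < \<bar>r\<bar> * norm v / 2" using r \<open>norm v > 0\<close> by simp
    ultimately show ?thesis by force
  qed
  then show ?thesis using \<open>\<delta> > 0\<close> by blast
qed

lemma is_solution_Cinf:
  assumes sol: "is_solution P Q \<gamma>" and P: "Cinf P" and Q: "Cinf Q"
  shows "Cinf \<gamma>"
proof -
  have "Cinf g" if "\<exists>H :: real \<times> real \<Rightarrow> real \<times> real. Cinf H \<and> g = (\<lambda>t. H (\<gamma> t))" for g
    using that
  proof (coinduction arbitrary: g)
    case Cinf
    then obtain H :: "real \<times> real \<Rightarrow> real \<times> real" where "Cinf H" and g: "g = (\<lambda>t. H (\<gamma> t))"
      by blast
    define H' where "H' z = frechet_derivative H (at z) (P z, Q z)" for z
    have d: "(g has_derivative (\<lambda>s. s *\<^sub>R H' (\<gamma> t))) (at t)" for t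
    proof -
      have "(\<gamma> has_derivative (\<lambda>s. s *\<^sub>R (P (\<gamma> t), Q (\<gamma> t)))) (at t)"
        using sol unfolding is_solution_def has_vector_derivative_def by blast
      from diff_chain_at[OF this Cinf_has_derivative[OF \<open>Cinf H\<close>]] show ?thesis
        unfolding g H'_def
        by (simp only: o_def linear_scale[OF has_derivative_linear[OF Cinf_has_derivative[OF \<open>Cinf H\<close>]]])
    qed
    have "(\<lambda>t. frechet_derivative g (at t) v) = (\<lambda>t. (\<lambda>z. v *\<^sub>R H' z) (\<gamma> t))" for v
      by (simp add: frechet_derivative_at[OF d, symmetric])
    moreover have "Cinf (\<lambda>z. v *\<^sub>R H' z)" for v
      unfolding H'_def using P Q \<open>Cinf H\<close> by (intro Cinf_scaleR Cinf_const Cinf_derivative_along)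
    ultimately show ?case using d by (auto simp: differentiable_def)
  qed
  then show ?thesis using Cinf_id by fastforce
qed

lemma Dop_eq_frechet_derivative:
  assumes "U differentiable (at z)"
  shows "Dop P Q U z = frechet_derivative U (at z) (P z, Q z)"
  by (simp add: Dop_def partial_x_def partial_y_def frechet_derivative_Pair[OF assms, of "P z" "Q z"]
      scaleR_conv_of_real)

lemma is_solution_has_vector_derivative_comp:
  assumes "is_solution P Q g" and "U differentiable (at (g t))"
  shows "((\<lambda>t. U (g t)) has_vector_derivative Dop P Q U (g t)) (at t)"
proof -
  have "(g has_derivative (\<lambda>s. s *\<^sub>R (P (g t), Q (g t)))) (at t)"
    using assms(1) unfolding is_solution_def has_vector_derivative_def by blast
  from diff_chain_at[OF this frechet_derivative_works[THEN iffD1, OF assms(2)]]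
  show ?thesis
    unfolding has_vector_derivative_def Dop_eq_frechet_derivative[OF assms(2)]
    by (simp only: o_def linear_scale[OF has_derivative_linear[OF
          frechet_derivative_works[THEN iffD1, OF assms(2)]]])
qed

section \<open>Closed orbits\<close>

definition nonconstant_periodic_solution ::
    "(real \<times> real \<Rightarrow> real) \<Rightarrow> (real \<times> real \<Rightarrow> real) \<Rightarrow> (real \<Rightarrow> real \<times> real) \<Rightarrow> real \<Rightarrow> bool" where
  "nonconstant_periodic_solution P Q g T \<longleftrightarrow>
     is_solution P Q g \<and> T > 0 \<and> (\<forall>t. g (t + T) = g t) \<and> (\<exists>s t. g s \<noteq> g t)"

lemma closed_orbits_iff:
  "C \<in> closed_orbits P Q \<longleftrightarrow> (\<exists>g T. nonconstant_periodic_solution P Q g T \<and> C = range g)"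
  by (auto simp: closed_orbits_def nonconstant_periodic_solution_def)

lemma nonconstant_periodic_solution_continuous_on:
  "nonconstant_periodic_solution P Q g T \<Longrightarrow> continuous_on S g"
  unfolding nonconstant_periodic_solution_def using is_solution_continuous_on by blast

lemma periodic_int:
  fixes g :: "real \<Rightarrow> 'a"
  assumes "\<forall>t. g (t + T) = g t"
  shows "g (t + real_of_int n * T) = g t"
proof -
  have nat: "g (t + real m * T) = g t" for t m
  proof (induction m)
    case (Suc m)
    have "g (t + real (Suc m) * T) = g ((t + real m * T) + T)" by (simp add: algebra_simps)
    then show ?case using assms Suc by simp
  qed simp
  show ?thesis
  proof (cases "n \<ge> 0")
    case True
    then show ?thesis using nat[of t "nat n"] by simp
  next
    case False
    then show ?thesis using nat[of "t + real_of_int n * T" "nat (- n)"] by simp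
  qed
qed

lemma periodic_range:
  fixes g :: "real \<Rightarrow> 'a"
  assumes "T > 0" "\<forall>t. g (t + T) = g t"
  shows "range g = g ` {0..T}"
proof (intro equalityI subsetI)
  fix x assume "x \<in> range g"
  then obtain t where x: "x = g t" by auto
  define n where "n = \<lfloor>t / T\<rfloor>"
  have "real_of_int n \<le> t / T" "t / T < real_of_int n + 1"
    unfolding n_def by linarith+
  then have "real_of_int n * T \<le> t" "t < (real_of_int n + 1) * T"
    using \<open>T > 0\<close> by (simp_all add: field_simps)
  then have "t - real_of_int n * T \<in> {0..T}" by (simp add: algebra_simps)
  moreover have "g t = g (t - real_of_int n * T)"
    using periodic_int[OF assms(2), of "t - real_of_int n * T" n] by simp
  ultimately show "x \<in> g ` {0..T}" using x by blast
qed auto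

lemma nonconstant_periodic_solution_compact_range:
  assumes "nonconstant_periodic_solution P Q g T"
  shows "compact (range g)"
proof -
  have "compact (g ` {0..T})"
    using nonconstant_periodic_solution_continuous_on[OF assms] by (rule compact_continuous_image[OF _ compact_Icc])
  then show ?thesis
    using assms periodic_range[of T g] by (simp add: nonconstant_periodic_solution_def)
qed

lemma Inf_mem_if_closed_under_diff:
  fixes S :: "real set"
  assumes "S \<noteq> {}" "\<delta> > 0" and ge: "\<And>x. x \<in> S \<Longrightarrow> \<delta> \<le> x"
    and diff: "\<And>x y. x \<in> S \<Longrightarrow> y \<in> S \<Longrightarrow> y < x \<Longrightarrow> x - y \<in> S"
  shows "Inf S \<in> S"
proof (rule ccontr)
  assume "Inf S \<notin> S"
  have bdd: "bdd_below S" using ge by (meson bdd_below.I)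
  obtain x where "x \<in> S" "x < Inf S + \<delta>"
    using cInf_lessD[OF \<open>S \<noteq> {}\<close>, of "Inf S + \<delta>"] \<open>\<delta> > 0\<close> by auto
  moreover have "Inf S < x"
    using cInf_lower[OF \<open>x \<in> S\<close> bdd] \<open>Inf S \<notin> S\<close> \<open>x \<in> S\<close> by (cases "Inf S = x") auto
  then obtain y where "y \<in> S" "y < x" using cInf_lessD[OF \<open>S \<noteq> {}\<close>] by blast
  moreover have "Inf S \<le> y" using cInf_lower[OF \<open>y \<in> S\<close> bdd] .
  ultimately have "x - y < \<delta>" by simp
  then show False using ge[OF diff[OF \<open>x \<in> S\<close> \<open>y \<in> S\<close> \<open>y < x\<close>]] by simp
qed

lemma nonconstant_periodic_solution_velocity_nonzero:
  assumes "Cinf P" "Cinf Q" "nonconstant_periodic_solution P Q g T"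
  shows "(P (g t), Q (g t)) \<noteq> 0"
  using is_solution_constant_if_stationary[OF assms(1,2), of g t] assms(3)
  unfolding nonconstant_periodic_solution_def by (metis zero_prod_def prod.inject)

text \<open>Periods are bounded away from \<open>0\<close> by local injectivity of the flow at a non-stationary
  point, so the least period exists.\<close>
lemma nonconstant_periodic_solution_minimal_period:
  assumes "Cinf P" "Cinf Q" and g: "nonconstant_periodic_solution P Q g T"
  shows "\<exists>T0>0. (\<forall>t. g (t + T0) = g t) \<and> inj_on g {0..<T0}"
proof -
  have sol: "is_solution P Q g" using g by (simp add: nonconstant_periodic_solution_def)
  define S where "S = {\<tau>. \<tau> > 0 \<and> (\<forall>t. g (t + \<tau>) = g t)}"
  obtain \<delta> where "\<delta> > 0" and \<delta>: "\<And>r. 0 < \<bar>r\<bar> \<Longrightarrow> \<bar>r\<bar> < \<delta> \<Longrightarrow> g (0 + r) \<noteq> g 0"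
    using is_solution_locally_injective[OF assms(1,2) sol
        nonconstant_periodic_solution_velocity_nonzero[OF assms]] by blast
  have ge: "\<delta> \<le> \<tau>" if "\<tau> \<in> S" for \<tau>
  proof (rule ccontr)
    assume "\<not> \<delta> \<le> \<tau>"
    then have "g (0 + \<tau>) \<noteq> g 0" using \<delta> that by (simp add: S_def)
    moreover have "g (0 + \<tau>) = g 0" using that by (simp only: S_def mem_Collect_eq)
    ultimately show False by contradiction
  qed
  have diff: "x - y \<in> S" if "x \<in> S" "y \<in> S" "y < x" for x y
  proof -
    have "g (t + (x - y)) = g t" for t
    proof -
      have "\<forall>t. g (t + x) = g t" "\<forall>t. g (t + y) = g t"
        using that by (simp_all add: S_def)
      then have "g ((t - y) + x) = g (t - y)" "g ((t - y) + y) = g (t - y)"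
        by blast+
      then show ?thesis by (simp add: algebra_simps)
    qed
    then show ?thesis using \<open>y < x\<close> by (simp add: S_def)
  qed
  have "T \<in> S" using g by (simp add: S_def nonconstant_periodic_solution_def)
  then have "Inf S \<in> S"
    using Inf_mem_if_closed_under_diff[OF _ \<open>\<delta> > 0\<close> ge diff] by blast
  moreover have "inj_on g {0..<Inf S}"
  proof -
    have "b - a \<in> S" if "a < b" "g a = g b" for a b
      using that is_solution_return_imp_periodic[OF assms(1,2) sol \<open>g a = g b\<close>] by (simp add: S_def)
    then have "\<not> (a < b \<and> g a = g b)" if "a \<in> {0..<Inf S}" "b \<in> {0..<Inf S}" for a b
      using that cInf_lower[of "b - a" S] ge by (force intro: bdd_belowI)
    then show ?thesis by (metis inj_onI linorder_neqE_linordered_idom)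
  qed
  ultimately show ?thesis by (auto simp: S_def)
qed

lemma nonconstant_periodic_solution_smooth_closed_curve:
  assumes "Cinf P" "Cinf Q" and g: "nonconstant_periodic_solution P Q g T"
  shows "smooth_closed_curve (range g)"
proof -
  have sol: "is_solution P Q g" using g by (simp add: nonconstant_periodic_solution_def)
  obtain T0 where "T0 > 0" and T0: "\<forall>t. g (t + T0) = g t" "inj_on g {0..<T0}"
    using nonconstant_periodic_solution_minimal_period[OF assms] by blast
  have "vector_derivative g (at t) = (P (g t), Q (g t))" for t
    using sol unfolding is_solution_def by (blast intro: vector_derivative_at)
  then have "vector_derivative g (at t) \<noteq> 0" for t
    using nonconstant_periodic_solution_velocity_nonzero[OF assms] by simp
  then show ?thesis
    unfolding smooth_closed_curve_def
    using is_solution_Cinf[OF sol assms(1,2)] \<open>T0 > 0\<close> T0 periodic_range[OF \<open>T0 > 0\<close> T0(1)]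
    by blast
qed

lemma closed_orbits_disjoint:
  assumes "Cinf P" "Cinf Q" "C1 \<in> closed_orbits P Q" "C2 \<in> closed_orbits P Q" "C1 \<noteq> C2"
  shows "C1 \<inter> C2 = {}"
proof -
  obtain g1 g2 where "C1 = range g1" "is_solution P Q g1" "C2 = range g2" "is_solution P Q g2"
    using assms(3,4) unfolding closed_orbits_def by blast
  then show ?thesis using is_solution_range_eq[OF assms(1,2)] assms(5) by blast
qed

lemma closed_orbits_smooth_closed_curve:
  assumes "Cinf P" "Cinf Q" "C \<in> closed_orbits P Q"
  shows "smooth_closed_curve C"
  using assms(3) nonconstant_periodic_solution_smooth_closed_curve[OF assms(1,2)]
  by (auto simp: closed_orbits_iff)

section \<open>Functions supplied by the algebra\<close>

definition circle :: "real \<Rightarrow> real \<Rightarrow> real \<Rightarrow> real \<Rightarrow> real \<times> real" where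
  "circle a b r t = (a + r * cos t, b + r * sin t)"

text \<open>Circles are closed orbits of a rotation field, which gives their smoothness for free.\<close>
lemma circle_nonconstant_periodic_solution:
  assumes "r \<noteq> 0"
  shows "nonconstant_periodic_solution (\<lambda>z. b - snd z) (\<lambda>z. fst z - a) (circle a b r) (2 * pi)"
  unfolding nonconstant_periodic_solution_def
proof (intro conjI)
  show "is_solution (\<lambda>z. b - snd z) (\<lambda>z. fst z - a) (circle a b r)"
    unfolding is_solution_def circle_def
    by (auto intro!: has_vector_derivative_Pair derivative_eq_intros
        simp: has_real_derivative_iff_has_vector_derivative[symmetric])
  show "\<exists>s t. circle a b r s \<noteq> circle a b r t"
    using assms by (intro exI[of _ 0] exI[of _ pi]) (simp add: circle_def)
qed (simp_all add: circle_def)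

lemma Cinf_rotation_field: "Cinf (\<lambda>z :: real \<times> real. b - snd z)" "Cinf (\<lambda>z :: real \<times> real. fst z - a)"
  using Cinf_affine[of "\<lambda>z. - snd z" b] Cinf_affine[of fst "- a"]
  by (simp_all add: bounded_linear_minus bounded_linear_fst bounded_linear_snd)

lemma smooth_closed_curve_circle: "r \<noteq> 0 \<Longrightarrow> smooth_closed_curve (range (circle a b r))"
  by (rule nonconstant_periodic_solution_smooth_closed_curve[OF Cinf_rotation_field
        circle_nonconstant_periodic_solution])

lemma dist_circle_center: "dist (circle a b r t) (a, b) = \<bar>r\<bar>"
proof -
  have "dist (circle a b r t) (a, b) = sqrt ((r * cos t)\<^sup>2 + (r * sin t)\<^sup>2)"
    by (simp add: circle_def dist_Pair_Pair dist_real_def)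
  also have "(r * cos t)\<^sup>2 + (r * sin t)\<^sup>2 = r\<^sup>2"
    by (simp add: power_mult_distrib flip: distrib_left)
  finally show ?thesis by simp
qed

text \<open>\<open>A\<close> need not contain the constants, so a function not vanishing at \<open>p\<close> or \<open>q\<close> has
  to be extracted from the separation of two disjoint circles through them.\<close>
lemma separates_imp_nonvanishing:
  assumes sep: "separates_compact_submanifolds A" and "p \<noteq> q"
  shows "\<exists>w\<in>A. (\<forall>z. w z \<in> \<real>) \<and> (w p \<noteq> 0 \<or> w q \<noteq> 0)"
proof -
  define r where "r = dist p q / 3"
  have "r > 0" using \<open>p \<noteq> q\<close> by (simp add: r_def)
  define C1 where "C1 = range (circle (fst p + r) (snd p) r)"
  define C2 where "C2 = range (circle (fst q + r) (snd q) r)"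
  have "circle (fst p + r) (snd p) r pi = p" "circle (fst q + r) (snd q) r pi = q"
    by (simp_all add: circle_def)
  then have "p \<in> C1" "q \<in> C2"
    unfolding C1_def C2_def by (metis rangeI)+
  have "C1 \<inter> C2 = {}"
  proof (rule ccontr)
    assume "C1 \<inter> C2 \<noteq> {}"
    then obtain s t where eq: "circle (fst p + r) (snd p) r s = circle (fst q + r) (snd q) r t"
      unfolding C1_def C2_def by blast
    have "dist (circle (fst p + r) (snd p) r s) (fst p + r, snd p) = r"
      using \<open>r > 0\<close> by (simp only: dist_circle_center abs_of_pos)
    moreover have "dist (circle (fst p + r) (snd p) r s) (fst q + r, snd q) = r"
      unfolding eq using \<open>r > 0\<close> by (simp only: dist_circle_center abs_of_pos)
    ultimately have "dist (fst p + r, snd p) (fst q + r, snd q) \<le> r + r"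
      using dist_triangle3[of "(fst p + r, snd p)" "(fst q + r, snd q)" "circle (fst p + r) (snd p) r s"]
      by linarith
    moreover have "dist (fst p + r, snd p) (fst q + r, snd q) = 3 * r"
      by (cases p, cases q) (simp add: r_def dist_Pair_Pair dist_real_def)
    ultimately show False using \<open>r > 0\<close> by simp
  qed
  moreover have "smooth_closed_curve C1" "smooth_closed_curve C2"
    unfolding C1_def C2_def using \<open>r > 0\<close> by (simp_all add: smooth_closed_curve_circle)
  ultimately have "finite {C1, C2} \<and> (\<forall>C\<in>{C1, C2}. smooth_closed_curve C) \<and>
      (\<forall>D1\<in>{C1, C2}. \<forall>D2\<in>{C1, C2}. D1 \<noteq> D2 \<longrightarrow> D1 \<inter> D2 = {})"
    by blast
  from sep[unfolded separates_compact_submanifolds_def, rule_format, OF this]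
  obtain f where "f \<in> A" "\<forall>z. f z \<in> \<real>"
    and f: "\<forall>D1\<in>{C1, C2}. \<forall>D2\<in>{C1, C2}. D1 \<noteq> D2 \<longrightarrow> (\<forall>x\<in>D1. \<forall>y\<in>D2. f x \<noteq> f y)"
    by blast
  moreover have "C1 \<noteq> C2" using \<open>C1 \<inter> C2 = {}\<close> \<open>p \<in> C1\<close> by blast
  ultimately have "f p \<noteq> f q" using \<open>p \<in> C1\<close> \<open>q \<in> C2\<close> by blast
  then have "f p \<noteq> 0 \<or> f q \<noteq> 0" by auto
  with \<open>f \<in> A\<close> \<open>\<forall>z. f z \<in> \<real>\<close> show ?thesis by blast
qed

lemma closed_orbits_separated:
  assumes "Cinf P" "Cinf Q" and sep: "separates_compact_submanifolds A"
    and "finite \<O>" "\<O> \<subseteq> closed_orbits P Q"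
  shows "\<exists>f. (\<lambda>z. complex_of_real (f z)) \<in> A \<and>
    (\<forall>C1\<in>\<O>. \<forall>C2\<in>\<O>. C1 \<noteq> C2 \<longrightarrow> f ` C1 \<inter> f ` C2 = {})"
proof -
  have "\<forall>C\<in>\<O>. smooth_closed_curve C"
    using assms(5) closed_orbits_smooth_closed_curve[OF assms(1,2)] by blast
  moreover have "\<forall>C1\<in>\<O>. \<forall>C2\<in>\<O>. C1 \<noteq> C2 \<longrightarrow> C1 \<inter> C2 = {}"
    using assms(5) closed_orbits_disjoint[OF assms(1,2)] by blast
  ultimately obtain f where "f \<in> A" "\<forall>z. f z \<in> \<real>"
    and f: "\<forall>C1\<in>\<O>. \<forall>C2\<in>\<O>. C1 \<noteq> C2 \<longrightarrow> (\<forall>x\<in>C1. \<forall>y\<in>C2. f x \<noteq> f y)"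
    using sep[unfolded separates_compact_submanifolds_def, rule_format, of \<O>] \<open>finite \<O>\<close> by blast
  have f_eq: "complex_of_real (Re (f z)) = f z" for z
  proof -
    have "f z \<in> \<real>" using \<open>\<forall>z. f z \<in> \<real>\<close> by blast
    then show ?thesis by (simp add: of_real_Re)
  qed
  have "(\<lambda>z. Re (f z)) ` C1 \<inter> (\<lambda>z. Re (f z)) ` C2 = {}" if "C1 \<in> \<O>" "C2 \<in> \<O>" "C1 \<noteq> C2" for C1 C2
  proof -
    have "Re (f x) \<noteq> Re (f y)" if "x \<in> C1" "y \<in> C2" for x y
      using f \<open>C1 \<in> \<O>\<close> \<open>C2 \<in> \<O>\<close> \<open>C1 \<noteq> C2\<close> that f_eq[of x] f_eq[of y] by metis
    then show ?thesis by blast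
  qed
  moreover have "(\<lambda>z. complex_of_real (Re (f z))) \<in> A" using \<open>f \<in> A\<close> by (simp only: f_eq)
  ultimately show ?thesis by (intro exI[of _ "\<lambda>z. Re (f z)"]) blast
qed

lemma subalgebra_Cinf: "subalgebra A \<Longrightarrow> U \<in> A \<Longrightarrow> Cinf U"
  unfolding subalgebra_def by blast

lemma subalgebra_real_continuous_on:
  "subalgebra A \<Longrightarrow> (\<lambda>z. complex_of_real (f z)) \<in> A \<Longrightarrow> continuous_on S f"
  using continuous_on_Re[OF Cinf_continuous_on[OF subalgebra_Cinf]] by fastforce

lemma subalgebra_mult: "subalgebra A \<Longrightarrow> U \<in> A \<Longrightarrow> V \<in> A \<Longrightarrow> (\<lambda>z. U z * V z) \<in> A"
  unfolding subalgebra_def by blast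

lemma subalgebra_cmult: "subalgebra A \<Longrightarrow> U \<in> A \<Longrightarrow> (\<lambda>z. c * U z) \<in> A"
  unfolding subalgebra_def by blast

lemma subalgebra_sum:
  assumes "subalgebra A" "finite I" "\<And>i. i \<in> I \<Longrightarrow> U i \<in> A"
  shows "(\<lambda>z. \<Sum>i\<in>I. U i z) \<in> A"
  using assms(2,3)
proof (induction I rule: finite_induct)
  case empty
  then show ?case using assms(1) by (simp add: subalgebra_def)
next
  case (insert i I)
  then show ?case using assms(1) by (simp add: subalgebra_def)
qed

lemma subalgebra_nonnegative_weight:
  assumes A: "subalgebra A" and sep: "separates_compact_submanifolds A" and "finite \<O>"
    and two: "\<And>C. C \<in> \<O> \<Longrightarrow> \<exists>p\<in>C. \<exists>q\<in>C. p \<noteq> q"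
  shows "\<exists>\<phi>. (\<lambda>z. complex_of_real (\<phi> z)) \<in> A \<and> (\<forall>z. 0 \<le> \<phi> z) \<and> (\<forall>C\<in>\<O>. \<exists>x\<in>C. 0 < \<phi> x)"
proof -
  have "\<exists>w. w \<in> A \<and> (\<forall>z. w z \<in> \<real>) \<and> (\<exists>x\<in>C. w x \<noteq> 0)" if C: "C \<in> \<O>" for C
  proof -
    obtain p q where "p \<in> C" "q \<in> C" "p \<noteq> q" using two[OF C] by blast
    with separates_imp_nonvanishing[OF sep \<open>p \<noteq> q\<close>] show ?thesis by blast
  qed
  then have "\<forall>C\<in>\<O>. \<exists>w. w \<in> A \<and> (\<forall>z. w z \<in> \<real>) \<and> (\<exists>x\<in>C. w x \<noteq> 0)" by blast
  from bchoice[OF this] obtain w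
    where w: "\<And>C. C \<in> \<O> \<Longrightarrow> w C \<in> A \<and> (\<forall>z. w C z \<in> \<real>) \<and> (\<exists>x\<in>C. w C x \<noteq> 0)"
    by blast
  have Re_w: "w C z = complex_of_real (Re (w C z))" if "C \<in> \<O>" for C z
  proof -
    have "w C z \<in> \<real>" using w[OF that] by blast
    then show ?thesis by (simp add: of_real_Re)
  qed
  define \<phi> where "\<phi> z = (\<Sum>C\<in>\<O>. (Re (w C z))\<^sup>2)" for z
  have "(\<lambda>z. \<Sum>C\<in>\<O>. w C z * w C z) \<in> A"
    using w by (intro subalgebra_sum[OF A \<open>finite \<O>\<close>] subalgebra_mult[OF A]) auto
  also have "(\<lambda>z. \<Sum>C\<in>\<O>. w C z * w C z) = (\<lambda>z. complex_of_real (\<phi> z))"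
    unfolding \<phi>_def of_real_sum
  proof (intro ext sum.cong refl)
    fix z C assume "C \<in> \<O>"
    show "w C z * w C z = complex_of_real ((Re (w C z))\<^sup>2)"
      by (subst (1 2) Re_w[OF \<open>C \<in> \<O>\<close>]) (simp add: power2_eq_square)
  qed
  finally have "(\<lambda>z. complex_of_real (\<phi> z)) \<in> A" .
  moreover have "\<exists>x\<in>C. 0 < \<phi> x" if C: "C \<in> \<O>" for C
  proof -
    obtain x where "x \<in> C" "w C x \<noteq> 0" using w[OF C] by blast
    then have "0 < (Re (w C x))\<^sup>2" using Re_w[OF C, of x] by fastforce
    also have "\<dots> \<le> \<phi> x"
      unfolding \<phi>_def using \<open>finite \<O>\<close> C by (intro member_le_sum) auto
    finally show ?thesis using \<open>x \<in> C\<close> by blast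
  qed
  moreover have "0 \<le> \<phi> z" for z unfolding \<phi>_def by (simp add: sum_nonneg)
  ultimately show ?thesis by blast
qed

text \<open>For the same reason, a polynomial in \<open>f\<close> is only available after multiplication by some
  \<open>\<phi> \<in> A\<close>.\<close>
lemma subalgebra_mult_polynomial:
  assumes A: "subalgebra A" and "\<phi> \<in> A" "(\<lambda>z. complex_of_real (f z)) \<in> A"
    and "real_polynomial_function p"
  shows "(\<lambda>z. \<phi> z * complex_of_real (p (f z))) \<in> A"
proof -
  obtain c n where p: "p = (\<lambda>x. \<Sum>i\<le>n. c i * x ^ i)"
    using assms(4) real_polynomial_function_iff_sum by blast
  have pow: "(\<lambda>z. \<phi> z * complex_of_real (f z) ^ i) \<in> A" for i
  proof (induction i)
    case (Suc i)
    from subalgebra_mult[OF A this assms(3)] show ?case by (simp add: mult_ac)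
  qed (simp add: \<open>\<phi> \<in> A\<close>)
  have "(\<lambda>z. \<Sum>i\<le>n. complex_of_real (c i) * (\<phi> z * complex_of_real (f z) ^ i)) \<in> A"
    using pow by (intro subalgebra_sum[OF A] subalgebra_cmult[OF A]) auto
  then show ?thesis
    unfolding p by (simp add: sum_distrib_left mult_ac)
qed

lemma polynomial_approximates_indicator:
  fixes K :: "'i \<Rightarrow> real set"
  assumes "finite I" "\<And>i. i \<in> I \<Longrightarrow> compact (K i)"
    and disj: "\<And>i j. i \<in> I \<Longrightarrow> j \<in> I \<Longrightarrow> i \<noteq> j \<Longrightarrow> K i \<inter> K j = {}"
    and "j \<in> I" "\<epsilon> > 0"
  shows "\<exists>p. real_polynomial_function p \<and> (\<forall>x\<in>\<Union>(K ` I). \<bar>p x - (if x \<in> K j then 1 else 0)\<bar> < \<epsilon>)"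
proof -
  define R where "R = \<Union>(K ` (I - {j}))"
  have "closed (K j)" "closed R"
    unfolding R_def using assms(1,2,4) by (auto intro!: compact_imp_closed compact_Union)
  moreover have "K j \<inter> R = {}" unfolding R_def using disj \<open>j \<in> I\<close> by blast
  ultimately have "continuous_on (K j \<union> R) (\<lambda>x. if x \<in> K j then 1 else 0 :: real)"
    by (intro continuous_on_cases continuous_on_const) auto
  moreover have "K j \<union> R = \<Union>(K ` I)" unfolding R_def using \<open>j \<in> I\<close> by blast
  moreover have "compact (\<Union>(K ` I))" using assms(1,2) by (intro compact_Union) auto
  ultimately have "continuous_on (\<Union>(K ` I)) (\<lambda>x. if x \<in> K j then 1 else 0 :: real)"
    by simp
  from Stone_Weierstrass_real_polynomial_function[OF \<open>compact (\<Union>(K ` I))\<close> this \<open>\<epsilon> > 0\<close>]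
  obtain p where "real_polynomial_function p"
    and "\<And>x. x \<in> \<Union>(K ` I) \<Longrightarrow> \<bar>(if x \<in> K j then 1 else 0) - p x\<bar> < \<epsilon>"
    by blast
  then show ?thesis by (intro exI[of _ p]) (simp add: abs_minus_commute)
qed

section \<open>Integrals along closed orbits\<close>

lemma integral_linear_combination:
  fixes f :: "'i \<Rightarrow> real \<Rightarrow> complex"
  assumes "finite I" "\<And>i. i \<in> I \<Longrightarrow> continuous_on {a..b} (f i)"
  shows "integral {a..b} (\<lambda>t. \<Sum>i\<in>I. c i * f i t) = (\<Sum>i\<in>I. c i * integral {a..b} (f i))"
proof -
  have "(\<lambda>t. c i * f i t) integrable_on {a..b}" if "i \<in> I" for i
    using assms(2)[OF that] by (intro integrable_continuous_interval continuous_intros)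
  then show ?thesis
    by (simp add: integral_sum[OF assms(1)] integral_mult_right)
qed

lemma integral_of_real:
  fixes h :: "real \<Rightarrow> real"
  assumes "h integrable_on S"
  shows "integral S (\<lambda>t. complex_of_real (h t)) = complex_of_real (integral S h)"
  using integral_linear[OF assms bounded_linear_of_real] by (simp add: o_def)

lemma integral_pos_if_continuous_nonneg:
  fixes h :: "real \<Rightarrow> real"
  assumes "continuous_on {a..b} h" "\<And>t. t \<in> {a..b} \<Longrightarrow> 0 \<le> h t" "a < b" "s \<in> {a..b}" "h s > 0"
  shows "integral {a..b} h > 0"
proof -
  have i: "h integrable_on {a..b}" by (rule integrable_continuous_interval[OF assms(1)])
  have "integral {a..b} h \<noteq> 0"
  proof
    assume "integral {a..b} h = 0"
    then have "(h has_integral 0) (cbox a b)"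
      using i by (metis cbox_interval has_integral_integrable_integral)
    from has_integral_0_cbox_imp_0[OF _ _ this] have "h s = 0"
      using assms by (simp add: cbox_interval)
    then show False using assms(5) by simp
  qed
  moreover have "integral {a..b} h \<ge> 0" using i assms(2) by (rule integral_nonneg)
  ultimately show ?thesis by simp
qed

lemma integral_weighted_near_const:
  fixes \<psi> h :: "real \<Rightarrow> real"
  assumes "continuous_on {a..b} \<psi>" "continuous_on {a..b} h"
    and "\<And>t. t \<in> {a..b} \<Longrightarrow> 0 \<le> \<psi> t \<and> \<bar>h t - c\<bar> \<le> \<epsilon>"
  shows "\<bar>integral {a..b} (\<lambda>t. \<psi> t * h t) - c * integral {a..b} \<psi>\<bar> \<le> \<epsilon> * integral {a..b} \<psi>"
proof -
  have "(\<lambda>t. \<psi> t * (h t - c)) integrable_on {a..b}" "(\<lambda>t. \<epsilon> * \<psi> t) integrable_on {a..b}"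
    using assms(1,2) by (auto intro!: integrable_continuous_interval continuous_on_mult
        continuous_on_diff continuous_on_const)
  moreover have "norm (\<psi> t * (h t - c)) \<le> \<epsilon> * \<psi> t" if "t \<in> {a..b}" for t
    using assms(3)[OF that] mult_left_mono[of "\<bar>h t - c\<bar>" \<epsilon> "\<psi> t"]
    by (simp add: abs_mult mult.commute)
  ultimately have "norm (integral {a..b} (\<lambda>t. \<psi> t * (h t - c))) \<le> integral {a..b} (\<lambda>t. \<epsilon> * \<psi> t)"
    by (rule integral_norm_bound_integral)
  moreover have "integral {a..b} (\<lambda>t. \<psi> t * (h t - c))
      = integral {a..b} (\<lambda>t. \<psi> t * h t) - c * integral {a..b} \<psi>"
    using assms(1,2)
    by (simp add: right_diff_distrib integral_diff integrable_continuous_interval continuous_on_mult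
        integral_mult_left mult.commute)
  ultimately show ?thesis by (simp add: integral_mult_right)
qed

definition orbit_integral :: "(real \<Rightarrow> real \<times> real) \<Rightarrow> real \<Rightarrow> (real \<times> real \<Rightarrow> complex) \<Rightarrow> complex" where
  "orbit_integral g T U = integral {0..T} (\<lambda>t. U (g t))"

lemma orbit_integral_Dop:
  assumes "nonconstant_periodic_solution P Q g T" "Cinf V"
  shows "orbit_integral g T (Dop P Q V) = 0"
proof -
  have sol: "is_solution P Q g" and "T > 0" "g T = g 0"
    using assms(1) unfolding nonconstant_periodic_solution_def by (metis add_0)+
  have "((\<lambda>t. Dop P Q V (g t)) has_integral V (g T) - V (g 0)) {0..T}"
    using \<open>T > 0\<close> is_solution_has_vector_derivative_comp[OF sol Cinf_differentiable[OF assms(2)]]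
    by (intro fundamental_theorem_of_calculus) (auto intro: has_vector_derivative_at_within)
  then show ?thesis
    unfolding orbit_integral_def using \<open>g T = g 0\<close> by (simp add: integral_unique)
qed

lemma orbit_integral_linear_combination:
  assumes "nonconstant_periodic_solution P Q g T" "finite I" "\<And>j. j \<in> I \<Longrightarrow> Cinf (u j)"
  shows "orbit_integral g T (\<lambda>z. \<Sum>j\<in>I. c j * u j z) = (\<Sum>j\<in>I. c j * orbit_integral g T (u j))"
  unfolding orbit_integral_def
proof (rule integral_linear_combination[OF assms(2)])
  show "continuous_on {0..T} (\<lambda>t. u j (g t))" if "j \<in> I" for j
  proof -
    have "continuous_on {0..T} g"
      using assms(1) by (auto simp: nonconstant_periodic_solution_def intro: is_solution_continuous_on)
    with Cinf_continuous_on[OF assms(3)[OF that], where S = UNIV] show ?thesis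
      by (rule continuous_on_compose2) simp
  qed
qed

lemma nonconstant_periodic_solution_integral_pos:
  fixes \<phi> :: "real \<times> real \<Rightarrow> real"
  assumes g: "nonconstant_periodic_solution P Q g T"
    and "continuous_on UNIV \<phi>" "\<And>z. 0 \<le> \<phi> z" "x \<in> range g" "0 < \<phi> x"
  shows "0 < integral {0..T} (\<lambda>t. \<phi> (g t))"
proof -
  have "T > 0" "range g = g ` {0..T}"
    using g periodic_range[of T g] by (simp_all add: nonconstant_periodic_solution_def)
  then obtain s where "s \<in> {0..T}" "0 < \<phi> (g s)" using assms(4,5) by auto
  moreover have "continuous_on {0..T} (\<lambda>t. \<phi> (g t))"
    using \<open>continuous_on UNIV \<phi>\<close> nonconstant_periodic_solution_continuous_on[OF g]
    by (rule continuous_on_compose2) simp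
  ultimately show ?thesis
    using integral_pos_if_continuous_nonneg[of 0 T "\<lambda>t. \<phi> (g t)"] \<open>T > 0\<close> assms(3) by blast
qed

lemma orbit_integral_weighted_near_const:
  assumes g: "nonconstant_periodic_solution P Q g T"
    and "continuous_on UNIV \<phi>" "continuous_on UNIV h" "\<And>z. 0 \<le> \<phi> z"
    and near: "\<And>z. z \<in> range g \<Longrightarrow> \<bar>h z - c\<bar> \<le> \<epsilon>"
  shows "norm (orbit_integral g T (\<lambda>z. complex_of_real (\<phi> z * h z))
      - complex_of_real (c * integral {0..T} (\<lambda>t. \<phi> (g t)))) \<le> \<epsilon> * integral {0..T} (\<lambda>t. \<phi> (g t))"
proof -
  have "continuous_on {0..T} g"
    using g by (rule nonconstant_periodic_solution_continuous_on)
  then have cont: "continuous_on {0..T} (\<lambda>t. \<phi> (g t))" "continuous_on {0..T} (\<lambda>t. h (g t))"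
    using assms(2,3) by (auto intro: continuous_on_compose2)
  have "orbit_integral g T (\<lambda>z. complex_of_real (\<phi> z * h z))
      = complex_of_real (integral {0..T} (\<lambda>t. \<phi> (g t) * h (g t)))"
    unfolding orbit_integral_def
    using cont by (intro integral_of_real integrable_continuous_interval continuous_on_mult)
  moreover have "\<bar>integral {0..T} (\<lambda>t. \<phi> (g t) * h (g t)) - c * integral {0..T} (\<lambda>t. \<phi> (g t))\<bar>
      \<le> \<epsilon> * integral {0..T} (\<lambda>t. \<phi> (g t))"
    using cont assms(4) near by (intro integral_weighted_near_const) auto
  ultimately show ?thesis by (simp only: norm_of_real flip: of_real_diff)
qed

section \<open>Independence modulo the range of the operator\<close>

lemma diagonally_dominant_imp_trivial_kernel:
  fixes m :: "'i \<Rightarrow> 'i \<Rightarrow> 'a::real_normed_field"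
  assumes "finite I"
    and dom: "\<And>i. i \<in> I \<Longrightarrow> (\<Sum>j\<in>I - {i}. norm (m i j)) < norm (m i i)"
    and ker: "\<And>i. i \<in> I \<Longrightarrow> (\<Sum>j\<in>I. m i j * d j) = 0"
  shows "\<forall>i\<in>I. d i = 0"
proof (rule ccontr)
  assume "\<not> (\<forall>i\<in>I. d i = 0)"
  then obtain k where "k \<in> I" "d k \<noteq> 0" by blast
  let ?M = "Max ((\<lambda>j. norm (d j)) ` I)"
  have "?M \<in> (\<lambda>j. norm (d j)) ` I" using \<open>finite I\<close> \<open>k \<in> I\<close> by (intro Max_in) auto
  then obtain i where "i \<in> I" "norm (d i) = ?M" by auto
  then have max: "\<And>j. j \<in> I \<Longrightarrow> norm (d j) \<le> norm (d i)" using \<open>finite I\<close> by simp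
  have "norm (d i) > 0"
    using max[OF \<open>k \<in> I\<close>] \<open>d k \<noteq> 0\<close> by (meson order_less_le_trans zero_less_norm_iff)
  have "m i i * d i = - (\<Sum>j\<in>I - {i}. m i j * d j)"
    using ker[OF \<open>i \<in> I\<close>] sum.remove[OF \<open>finite I\<close> \<open>i \<in> I\<close>, of "\<lambda>j. m i j * d j"]
    by (simp add: eq_neg_iff_add_eq_0)
  then have "norm (m i i) * norm (d i) = norm (\<Sum>j\<in>I - {i}. m i j * d j)"
    by (simp flip: norm_mult)
  also have "\<dots> \<le> (\<Sum>j\<in>I - {i}. norm (m i j) * norm (d j))"
    by (rule order_trans[OF norm_sum]) (simp add: norm_mult)
  also have "\<dots> \<le> (\<Sum>j\<in>I - {i}. norm (m i j)) * norm (d i)"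
    unfolding sum_distrib_right using max by (intro sum_mono mult_left_mono) auto
  also have "\<dots> < norm (m i i) * norm (d i)"
    using dom[OF \<open>i \<in> I\<close>] \<open>norm (d i) > 0\<close> by (rule mult_strict_right_mono)
  finally show False by simp
qed

lemma diagonally_dominant_if_near_diagonal:
  fixes m :: "'i \<Rightarrow> 'i \<Rightarrow> 'a::real_normed_algebra_1"
  assumes "finite I" "i \<in> I" "a i > 0" "real (card I) * \<epsilon> < 1"
    and near: "\<And>j. j \<in> I \<Longrightarrow> norm (m i j - (if j = i then of_real (a i) else 0)) \<le> \<epsilon> * a i"
  shows "(\<Sum>j\<in>I - {i}. norm (m i j)) < norm (m i i)"
proof -
  have "(\<Sum>j\<in>I - {i}. norm (m i j)) \<le> (\<Sum>j\<in>I - {i}. \<epsilon> * a i)"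
  proof (rule sum_mono)
    fix j assume "j \<in> I - {i}"
    then show "norm (m i j) \<le> \<epsilon> * a i" using near[of j] by simp
  qed
  also have "\<dots> = (real (card I) - 1) * \<epsilon> * a i"
  proof -
    have "1 \<le> card I" using assms(1,2) by (simp add: Suc_le_eq card_gt_0_iff) blast
    then show ?thesis using assms(1,2) by (simp add: card_Diff_singleton of_nat_diff)
  qed
  also have "\<dots> < (1 - \<epsilon>) * a i"
    using assms(3,4) by (intro mult_strict_right_mono) (auto simp: algebra_simps)
  also have "\<dots> = norm (of_real (a i) :: 'a) - \<epsilon> * a i"
    using assms(3) by (simp add: algebra_simps)
  also have "\<dots> \<le> norm (m i i)"
    using near[OF \<open>i \<in> I\<close>] norm_triangle_ineq2[of "of_real (a i) :: 'a" "m i i"]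
    by (simp add: norm_minus_commute)
  finally show ?thesis .
qed

lemma card_le_quotient_dim:
  fixes u :: "'i \<Rightarrow> real \<times> real \<Rightarrow> complex" and L :: "'i \<Rightarrow> (real \<times> real \<Rightarrow> complex) \<Rightarrow> complex"
  assumes "finite I" "u ` I \<subseteq> V"
    and vanish: "\<And>i w. i \<in> I \<Longrightarrow> w \<in> W \<Longrightarrow> L i w = 0"
    and lin: "\<And>i c. i \<in> I \<Longrightarrow> L i (\<lambda>z. \<Sum>j\<in>I. c j * u j z) = (\<Sum>j\<in>I. c j * L i (u j))"
    and nonsing: "\<And>c. \<forall>i\<in>I. (\<Sum>j\<in>I. c j * L i (u j)) = 0 \<Longrightarrow> \<forall>j\<in>I. c j = 0"
  shows "enat (card I) \<le> quotient_dim V W"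
proof -
  have "inj_on u I"
  proof (rule inj_onI, rule ccontr)
    fix i j assume "i \<in> I" "j \<in> I" "u i = u j" "i \<noteq> j"
    define c where "c k = (if k = i then 1 else 0) - (if k = j then 1 else 0 :: complex)" for k
    have "(\<Sum>k\<in>I. c k * x k) = x i - x j" for x :: "'i \<Rightarrow> complex"
      using \<open>finite I\<close> \<open>i \<in> I\<close> \<open>j \<in> I\<close>
      by (simp add: c_def left_diff_distrib sum_subtractf if_distrib[of "\<lambda>a. a * _"] sum.delta
          cong: if_cong)
    then have "\<forall>i'\<in>I. (\<Sum>k\<in>I. c k * L i' (u k)) = 0" using \<open>u i = u j\<close> by simp
    from nonsing[OF this] \<open>i \<in> I\<close> have "c i = 0" by blast
    with \<open>i \<noteq> j\<close> show False by (simp add: c_def)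
  qed
  have "indep_mod W (u ` I)"
    unfolding indep_mod_def
  proof (intro allI impI ballI)
    fix c v assume "(\<lambda>z. \<Sum>w\<in>u ` I. c w * w z) \<in> W" "v \<in> u ` I"
    then have "(\<lambda>z. \<Sum>j\<in>I. c (u j) * u j z) \<in> W"
      by (simp add: sum.reindex[OF \<open>inj_on u I\<close>])
    then have "\<forall>i\<in>I. (\<Sum>j\<in>I. c (u j) * L i (u j)) = 0"
      using vanish lin[of _ "\<lambda>j. c (u j)"] by simp
    from nonsing[OF this] \<open>v \<in> u ` I\<close> show "c v = 0" by blast
  qed
  then have "enat (card (u ` I)) \<le> quotient_dim V W"
    unfolding quotient_dim_def using \<open>finite I\<close> \<open>u ` I \<subseteq> V\<close> by (intro SUP_upper) auto
  then show ?thesis by (simp add: card_image[OF \<open>inj_on u I\<close>])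
qed

lemma closed_orbits_test_functions:
  assumes "Cinf P" "Cinf Q" and A: "subalgebra A" and sep: "separates_compact_submanifolds A"
    and "finite \<O>"
    and g: "\<And>C. C \<in> \<O> \<Longrightarrow> nonconstant_periodic_solution P Q (g C) (T C) \<and> range (g C) = C"
  shows "\<exists>U. U ` \<O> \<subseteq> A \<and> (\<forall>C\<in>\<O>. (\<Sum>C'\<in>\<O> - {C}. norm (orbit_integral (g C) (T C) (U C')))
      < norm (orbit_integral (g C) (T C) (U C)))"
proof -
  have "\<O> \<subseteq> closed_orbits P Q"
  proof
    fix C assume "C \<in> \<O>"
    then show "C \<in> closed_orbits P Q" using g[of C] by (auto simp: closed_orbits_iff)
  qed
  from closed_orbits_separated[OF assms(1,2) sep \<open>finite \<O>\<close> this] obtain f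
    where f: "(\<lambda>z. complex_of_real (f z)) \<in> A \<and>
      (\<forall>C1\<in>\<O>. \<forall>C2\<in>\<O>. C1 \<noteq> C2 \<longrightarrow> f ` C1 \<inter> f ` C2 = {})" ..
  then have "(\<lambda>z. complex_of_real (f z)) \<in> A" ..
  have f_disj: "f ` C1 \<inter> f ` C2 = {}" if "C1 \<in> \<O>" "C2 \<in> \<O>" "C1 \<noteq> C2" for C1 C2
    using conjunct2[OF f] that by simp
  have "\<exists>p\<in>C. \<exists>q\<in>C. p \<noteq> q" if "C \<in> \<O>" for C
    using g[OF that] unfolding nonconstant_periodic_solution_def by blast
  from subalgebra_nonnegative_weight[OF A sep \<open>finite \<O>\<close> this] obtain \<phi>
    where "(\<lambda>z. complex_of_real (\<phi> z)) \<in> A" "\<forall>z. 0 \<le> \<phi> z" and \<phi>_pos: "\<forall>C\<in>\<O>. \<exists>x\<in>C. 0 < \<phi> x"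
    by blast
  have "continuous_on UNIV f" "continuous_on UNIV \<phi>"
    using subalgebra_real_continuous_on[OF A] \<open>(\<lambda>z. complex_of_real (f z)) \<in> A\<close>
      \<open>(\<lambda>z. complex_of_real (\<phi> z)) \<in> A\<close> by blast+
  have "compact (f ` C)" if "C \<in> \<O>" for C
  proof -
    have "compact C"
      using nonconstant_periodic_solution_compact_range[OF conjunct1[OF g[OF that]]] g[OF that] by simp
    with continuous_on_subset[OF \<open>continuous_on UNIV f\<close> subset_UNIV] show ?thesis
      by (rule compact_continuous_image)
  qed
  define \<epsilon> where "\<epsilon> = 1 / (real (card \<O>) + 1)"
  have "\<epsilon> > 0" "real (card \<O>) * \<epsilon> < 1" by (simp_all add: \<epsilon>_def field_simps)
  have "\<exists>p. real_polynomial_function p \<and>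
      (\<forall>x\<in>\<Union>C'\<in>\<O>. f ` C'. \<bar>p x - (if x \<in> f ` C then 1 else 0)\<bar> < \<epsilon>)" if "C \<in> \<O>" for C
    using polynomial_approximates_indicator[where K = "\<lambda>C. f ` C", OF \<open>finite \<O>\<close>
        \<open>\<And>C. C \<in> \<O> \<Longrightarrow> compact (f ` C)\<close> f_disj that \<open>\<epsilon> > 0\<close>] .
  then have "\<forall>C\<in>\<O>. \<exists>p. real_polynomial_function p \<and>
      (\<forall>x\<in>\<Union>C'\<in>\<O>. f ` C'. \<bar>p x - (if x \<in> f ` C then 1 else 0)\<bar> < \<epsilon>)" by simp
  from bchoice[OF this] obtain p where p_spec: "\<forall>C\<in>\<O>. real_polynomial_function (p C) \<and>
      (\<forall>x\<in>\<Union>C'\<in>\<O>. f ` C'. \<bar>p C x - (if x \<in> f ` C then 1 else 0)\<bar> < \<epsilon>)" ..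
  have p: "real_polynomial_function (p C)" if "C \<in> \<O>" for C
    using p_spec that by blast
  have p_approx: "\<bar>p C x - (if x \<in> f ` C then 1 else 0)\<bar> < \<epsilon>"
    if "C \<in> \<O>" "x \<in> (\<Union>C'\<in>\<O>. f ` C')" for C x
    using p_spec that by blast
  define U where "U C = (\<lambda>z. complex_of_real (\<phi> z * p C (f z)))" for C
  have "U ` \<O> \<subseteq> A"
    using subalgebra_mult_polynomial[OF A \<open>(\<lambda>z. complex_of_real (\<phi> z)) \<in> A\<close>
        \<open>(\<lambda>z. complex_of_real (f z)) \<in> A\<close> p] by (auto simp: U_def)
  define a where "a C = integral {0..T C} (\<lambda>t. \<phi> (g C t))" for C
  have a_pos: "a C > 0" if C: "C \<in> \<O>" for C
  proof -
    obtain x where "x \<in> range (g C)" "0 < \<phi> x" using \<phi>_pos C g[OF C] by blast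
    with nonconstant_periodic_solution_integral_pos[OF conjunct1[OF g[OF C]]
        \<open>continuous_on UNIV \<phi>\<close> \<open>\<forall>z. 0 \<le> \<phi> z\<close>[rule_format]]
    show ?thesis unfolding a_def .
  qed
  have near: "norm (orbit_integral (g C) (T C) (U C') - (if C' = C then of_real (a C) else 0))
      \<le> \<epsilon> * a C" if "C \<in> \<O>" "C' \<in> \<O>" for C C'
  proof -
    have "\<bar>p C' (f z) - (if C' = C then 1 else 0)\<bar> \<le> \<epsilon>" if "z \<in> range (g C)" for z
    proof -
      have "f z \<in> f ` C" using that g[OF \<open>C \<in> \<O>\<close>] by simp
      moreover from p_approx[OF \<open>C' \<in> \<O>\<close>, of "f z"] this \<open>C \<in> \<O>\<close>
      have "\<bar>p C' (f z) - (if f z \<in> f ` C' then 1 else 0)\<bar> < \<epsilon>" by blast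
      moreover have "f z \<in> f ` C' \<longleftrightarrow> C' = C"
        using calculation(1) f_disj[OF \<open>C \<in> \<O>\<close> \<open>C' \<in> \<O>\<close>] by auto
      ultimately show ?thesis by simp
    qed
    moreover have "continuous_on UNIV (p C')"
      using p[OF \<open>C' \<in> \<O>\<close>] by (simp add: real_polynomial_function_eq continuous_on_polymonial_function)
    from continuous_on_compose2[OF this \<open>continuous_on UNIV f\<close>]
    have "continuous_on UNIV (\<lambda>z. p C' (f z))" by simp
    ultimately have "norm (orbit_integral (g C) (T C) (U C')
        - of_real ((if C' = C then 1 else 0) * a C)) \<le> \<epsilon> * a C"
      using orbit_integral_weighted_near_const[OF conjunct1[OF g[OF \<open>C \<in> \<O>\<close>]]
          \<open>continuous_on UNIV \<phi>\<close> _ \<open>\<forall>z. 0 \<le> \<phi> z\<close>[rule_format]]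
      unfolding U_def a_def by blast
    then show ?thesis by (cases "C' = C") simp_all
  qed
  have "(\<Sum>C'\<in>\<O> - {C}. norm (orbit_integral (g C) (T C) (U C')))
      < norm (orbit_integral (g C) (T C) (U C))" if "C \<in> \<O>" for C
    using diagonally_dominant_if_near_diagonal[where m = "\<lambda>C C'. orbit_integral (g C) (T C) (U C')"
        and a = a, OF \<open>finite \<O>\<close> that a_pos[OF that] \<open>real (card \<O>) * \<epsilon> < 1\<close> near[OF that]] .
  with \<open>U ` \<O> \<subseteq> A\<close> show ?thesis by blast
qed

lemma quotient_dim_ge_card_closed_orbits:
  assumes "Cinf P" "Cinf Q" and A: "subalgebra A" and sep: "separates_compact_submanifolds A"
    and "finite \<O>" "\<O> \<subseteq> closed_orbits P Q"
  shows "enat (card \<O>) \<le> quotient_dim A (Dop P Q ` A)"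
proof -
  have "\<forall>C\<in>\<O>. \<exists>gT. nonconstant_periodic_solution P Q (fst gT) (snd gT) \<and> range (fst gT) = C"
    using \<open>\<O> \<subseteq> closed_orbits P Q\<close> by (fastforce simp: closed_orbits_iff)
  from bchoice[OF this] obtain gT
    where g: "\<And>C. C \<in> \<O> \<Longrightarrow> nonconstant_periodic_solution P Q (fst (gT C)) (snd (gT C))
      \<and> range (fst (gT C)) = C"
    by blast
  obtain U where "U ` \<O> \<subseteq> A" and dominant: "\<And>C. C \<in> \<O> \<Longrightarrow>
      (\<Sum>C'\<in>\<O> - {C}. norm (orbit_integral (fst (gT C)) (snd (gT C)) (U C')))
      < norm (orbit_integral (fst (gT C)) (snd (gT C)) (U C))"
    using closed_orbits_test_functions[OF assms(1,2) A sep \<open>finite \<O>\<close> g] by blast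
  have "Cinf (U C)" if "C \<in> \<O>" for C
    using \<open>U ` \<O> \<subseteq> A\<close> that subalgebra_Cinf[OF A] by blast
  show ?thesis
  proof (rule card_le_quotient_dim[where L = "\<lambda>C. orbit_integral (fst (gT C)) (snd (gT C))"])
    show "orbit_integral (fst (gT C)) (snd (gT C)) w = 0" if "C \<in> \<O>" "w \<in> Dop P Q ` A" for C w
      using that g[OF \<open>C \<in> \<O>\<close>] orbit_integral_Dop subalgebra_Cinf[OF A] by blast
    show "orbit_integral (fst (gT C)) (snd (gT C)) (\<lambda>z. \<Sum>C'\<in>\<O>. c C' * U C' z)
        = (\<Sum>C'\<in>\<O>. c C' * orbit_integral (fst (gT C)) (snd (gT C)) (U C'))" if "C \<in> \<O>" for C c
      using orbit_integral_linear_combination g[OF that] \<open>finite \<O>\<close> \<open>\<And>C. C \<in> \<O> \<Longrightarrow> Cinf (U C)\<close>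
      by blast
    show "\<forall>C'\<in>\<O>. c C' = 0"
      if "\<forall>C\<in>\<O>. (\<Sum>C'\<in>\<O>. c C' * orbit_integral (fst (gT C)) (snd (gT C)) (U C')) = 0" for c
      using diagonally_dominant_imp_trivial_kernel[OF \<open>finite \<O>\<close> dominant] that
      by (simp add: mult.commute)
  qed (use \<open>finite \<O>\<close> \<open>U ` \<O> \<subseteq> A\<close> in auto)
qed

theorem mainTheorem2:
  fixes P Q :: "real \<times> real \<Rightarrow> real" and A :: "(real \<times> real \<Rightarrow> complex) set"
  assumes "Cinf P" and "Cinf Q"
    and "subalgebra A" and "self_adjoint A" and "separates_compact_submanifolds A"
    and "Dop P Q ` A \<subseteq> A"
  shows "ecard (closed_orbits P Q) \<le> quotient_dim A (Dop P Q ` A)"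
proof (cases "finite (closed_orbits P Q)")
  case True
  then show ?thesis
    using quotient_dim_ge_card_closed_orbits[OF assms(1,2,3,5) True] by (simp add: ecard_def)
next
  case False
  have "enat n \<le> quotient_dim A (Dop P Q ` A)" for n
  proof -
    obtain \<O> where "finite \<O>" "card \<O> = n" "\<O> \<subseteq> closed_orbits P Q"
      using infinite_arbitrarily_large[OF False] by blast
    then show ?thesis using quotient_dim_ge_card_closed_orbits[OF assms(1,2,3,5)] by blast
  qed
  then have "quotient_dim A (Dop P Q ` A) = \<infinity>"
    by (metis enat_ord_simps(1) le_add1 not_infinity_eq not_one_le_zero Suc_n_not_le_n)
  then show ?thesis by simp
qed

end
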